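(* Let $0 \leq a \leq b$. For any $t > 0$, \[ \mathcal{R}_I(t,a,b) = O\!\left(\frac1t\right). \] Whenever $b \leq \frac14$, setting $\delta_b = \frac14 - b$, \[ \mathcal{R}_I(t,a,b) = O\!\left(\frac{e^{-\frac34 t^2\delta_b^2}}{t^{\frac32}}\right). \]
   Context: For $0\le a\le b$ and $t>0$, define $f_t:[0,\infty)\to\mathbb{R}$ by $f_t(\lambda) = \frac{t}{\sqrt\pi}\int_a^b \exp(-t^2(\lambda-\mu)^2)\,d\mu$ (the convolution of $\mathbf{1}_{[a,b]}$ with the normalised Gaussian $\frac{t}{\sqrt\pi}e^{-t^2x^2}$), and \[ \mathcal{R}_I(t,a,b) = \frac{1}{4\pi}\int_{\frac14}^{+\infty}\big(f_t(\lambda) - \mathbf{1}_{[a,b]}(\lambda)\big)\tanh\!\Big(\pi\sqrt{\lambda-\tfrac14}\Big)\,d\lambda. \] $T_1 = O(T_2)$ means $|T_1|\le CT_2$ with a universal constant $C$ independent of $t,a,b$. *)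

theory Defs
  imports "HOL-Analysis.Analysis"
begin

definition f_t :: "real \<Rightarrow> real \<Rightarrow> real \<Rightarrow> real \<Rightarrow> real" where
  "f_t t a b x = t / sqrt pi * (LINT \<mu>:{a..b}|lborel. exp (- (t\<^sup>2 * (x - \<mu>)\<^sup>2)))"

definition R_I :: "real \<Rightarrow> real \<Rightarrow> real \<Rightarrow> real" where
  "R_I t a b = 1 / (4 * pi) *
     (LINT x:{1/4..}|lborel. (f_t t a b x - indicator {a..b} x) * tanh (pi * sqrt (x - 1/4)))"

end

(*
  f_t is the convolution of the indicator of [a, b] with a Gaussian of width about 1/t, so
  |f_t(x) - 1_[a,b](x)| is controlled by the Gaussian mass beyond the endpoints.  Because
  (u + v)^2 >= u^2 + v^2 for u, v >= 0, that mass is at most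
  (exp(-t^2 (x - a)^2) + exp(-t^2 (x - b)^2)) / 2, and since each of these Gaussians has
  integral sqrt(pi)/t, the bound |tanh| <= 1 gives the O(1/t) estimate.

  If b <= 1/4, the indicator meets [1/4, oo) at most in the point 1/4, where tanh vanishes, so
  only f_t itself is integrated.  Writing u = x - 1/4, the same splitting of squares gives
  f_t(x) <= exp(-t^2 delta_b^2) exp(-t^2 u^2) / 2, while
  tanh(pi sqrt u) <= 2 pi sqrt u <= pi (1 + t u) / sqrt t by AM-GM.  The integrals of
  exp(-t^2 u^2) and t u exp(-t^2 u^2) over u >= 0 are O(1/t), which gives
  exp(-t^2 delta_b^2) / t^(3/2).  Both bounds hold with C = 1.
*)

theory Submission
  imports Defs "HOL-Probability.Distributions"
begin

definition gauss_kernel :: "real \<Rightarrow> real \<Rightarrow> real \<Rightarrow> real" where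
  "gauss_kernel t c x = t / sqrt pi * exp (- (t\<^sup>2 * (x - c)\<^sup>2))"

lemma gauss_kernel_eq_normal_density:
  assumes "t > 0"
  shows "gauss_kernel t c = normal_density c (1 / (t * sqrt 2))"
proof
  fix x
  have "sqrt (2 * pi * (1 / (t * sqrt 2))\<^sup>2) = sqrt pi / t"
    using assms by (simp add: power_divide power_mult_distrib real_sqrt_divide real_sqrt_mult)
  moreover have "(x - c)\<^sup>2 / (2 * (1 / (t * sqrt 2))\<^sup>2) = t\<^sup>2 * (x - c)\<^sup>2"
    using assms by (simp add: power_divide power_mult_distrib)
  ultimately show "gauss_kernel t c x = normal_density c (1 / (t * sqrt 2)) x"
    unfolding gauss_kernel_def normal_density_def by (simp add: field_simps)
qed

lemma gauss_kernel_nonneg: "0 \<le> t \<Longrightarrow> 0 \<le> gauss_kernel t c x"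
  by (simp add: gauss_kernel_def)

lemma integrable_gauss_kernel: "t > 0 \<Longrightarrow> integrable lborel (gauss_kernel t c)"
  by (simp add: gauss_kernel_eq_normal_density)

lemma integral_gauss_kernel: "t > 0 \<Longrightarrow> integral\<^sup>L lborel (gauss_kernel t c) = 1"
  by (simp add: gauss_kernel_eq_normal_density)

lemma integrable_gauss_kernel_indicator:
  "t > 0 \<Longrightarrow> S \<in> sets borel \<Longrightarrow> integrable lborel (\<lambda>m. gauss_kernel t c m * indicator S m)"
  by (intro integrable_real_mult_indicator integrable_gauss_kernel) auto

lemma f_t_eq_integral_gauss_kernel:
  "f_t t a b x = (\<integral>m. gauss_kernel t x m * indicator {a..b} m \<partial>lborel)"
proof -
  have "(\<lambda>m. gauss_kernel t x m * indicator {a..b} m) =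
        (\<lambda>m. t / sqrt pi * (indicator {a..b} m *\<^sub>R exp (- (t\<^sup>2 * (x - m)\<^sup>2))))"
    by (auto simp: gauss_kernel_def fun_eq_iff power2_commute split: split_indicator)
  then show ?thesis
    unfolding f_t_def set_lebesgue_integral_def by simp
qed

lemma has_bochner_integral_lborel_rescale:
  fixes g :: "real \<Rightarrow> real"
  assumes "s > 0" "has_bochner_integral lborel g I"
  shows "has_bochner_integral lborel (\<lambda>x. g (s * (x - c))) (I / s)"
proof -
  have "has_bochner_integral lborel (\<lambda>x. g (- s * c + s * x)) (I / s)"
    using lborel_has_bochner_integral_real_affine_iff[of s g I "- s * c"] assms
    by (simp add: field_simps)
  then show ?thesis
    by (simp add: algebra_simps)
qed

lemma exp_neg_square_le_split:
  fixes t c x m :: real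
  assumes "0 \<le> (c - x) * (m - c)"
  shows "exp (- (t\<^sup>2 * (m - x)\<^sup>2)) \<le> exp (- (t\<^sup>2 * (c - x)\<^sup>2)) * exp (- (t\<^sup>2 * (m - c)\<^sup>2))"
proof -
  have "(m - x)\<^sup>2 = (c - x)\<^sup>2 + (m - c)\<^sup>2 + 2 * ((c - x) * (m - c))"
    by (simp add: power2_eq_square algebra_simps)
  then have "t\<^sup>2 * ((c - x)\<^sup>2 + (m - c)\<^sup>2) \<le> t\<^sup>2 * (m - x)\<^sup>2"
    using assms by (intro mult_left_mono) auto
  then show ?thesis
    by (simp add: exp_add[symmetric] algebra_simps)
qed

lemma gauss_kernel_right_tail:
  assumes t: "t > 0" and "x \<le> c"
  shows "(\<integral>m. gauss_kernel t x m * indicator {c..} m \<partial>lborel) \<le> exp (- (t\<^sup>2 * (c - x)\<^sup>2)) / 2"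
proof -
  define E where "E = exp (- (t\<^sup>2 * (c - x)\<^sup>2))"
  let ?H = "\<lambda>m. E * (t / sqrt pi) * (indicator {0..} (t * (m - c)) * exp (- (t * (m - c))\<^sup>2))"
  have "has_bochner_integral lborel (\<lambda>y. indicator {0..} y * exp (- y\<^sup>2)) (sqrt pi / 2)"
    using gaussian_moment_0 by simp
  then have H: "has_bochner_integral lborel ?H (E * (t / sqrt pi) * (sqrt pi / 2 / t))"
    by (intro has_bochner_integral_mult_right has_bochner_integral_lborel_rescale t)
  have "(\<integral>m. gauss_kernel t x m * indicator {c..} m \<partial>lborel) \<le> integral\<^sup>L lborel ?H"
  proof (rule integral_mono')
    show "integrable lborel ?H"
      using H by (rule integrable.intros)
    fix m
    show H_nonneg: "0 \<le> ?H m"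
      using t by (simp add: E_def)
    show "gauss_kernel t x m * indicator {c..} m \<le> ?H m"
    proof (cases "c \<le> m")
      case True
      then have "exp (- (t\<^sup>2 * (m - x)\<^sup>2)) \<le> E * exp (- (t\<^sup>2 * (m - c)\<^sup>2))"
        unfolding E_def using \<open>x \<le> c\<close> by (intro exp_neg_square_le_split) simp
      then have "t / sqrt pi * exp (- (t\<^sup>2 * (m - x)\<^sup>2))
          \<le> t / sqrt pi * (E * exp (- (t\<^sup>2 * (m - c)\<^sup>2)))"
        using t by (intro mult_left_mono) auto
      then show ?thesis
        using True t by (simp add: gauss_kernel_def power_mult_distrib mult_ac)
    qed (use H_nonneg in simp)
  qed
  also have "\<dots> = E / 2"
    using has_bochner_integral_integral_eq[OF H] t by simp
  finally show ?thesis
    by (simp add: E_def)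
qed

lemma gauss_kernel_left_tail:
  assumes t: "t > 0" and "c \<le> x"
  shows "(\<integral>m. gauss_kernel t x m * indicator {..c} m \<partial>lborel) \<le> exp (- (t\<^sup>2 * (x - c)\<^sup>2)) / 2"
proof -
  have "(\<integral>m. gauss_kernel t x m * indicator {..c} m \<partial>lborel)
      = (\<integral>m. gauss_kernel t x (- m) * indicator {..c} (- m) \<partial>lborel)"
    using lborel_integral_real_affine[of "-1" _ 0] by simp
  also have "\<dots> = (\<integral>m. gauss_kernel t (- x) m * indicator {- c..} m \<partial>lborel)"
  proof (intro Bochner_Integration.integral_cong refl)
    fix m
    have "(- m - x)\<^sup>2 = (m - - x)\<^sup>2"
      by (simp add: power2_eq_square algebra_simps)
    then show "gauss_kernel t x (- m) * indicator {..c} (- m) = gauss_kernel t (- x) m * indicator {- c..} m"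
      by (simp add: gauss_kernel_def split: split_indicator)
  qed
  also have "\<dots> \<le> exp (- (t\<^sup>2 * (x - c)\<^sup>2)) / 2"
    using gauss_kernel_right_tail[OF t, of "- x" "- c"] \<open>c \<le> x\<close> by (simp add: power2_commute)
  finally show ?thesis .
qed

lemma f_t_nonneg: "0 \<le> t \<Longrightarrow> 0 \<le> f_t t a b x"
  unfolding f_t_eq_integral_gauss_kernel by (intro integral_nonneg_AE) (simp add: gauss_kernel_nonneg)

lemma f_t_le_1:
  assumes t: "t > 0"
  shows "f_t t a b x \<le> 1"
proof -
  have "f_t t a b x \<le> integral\<^sup>L lborel (gauss_kernel t x)"
    unfolding f_t_eq_integral_gauss_kernel using t
    by (intro integral_mono' integrable_gauss_kernel)
       (auto simp: gauss_kernel_nonneg split: split_indicator)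
  then show ?thesis
    using integral_gauss_kernel[OF t] by simp
qed

lemma f_t_le_right_of_interval:
  assumes t: "t > 0" and "b \<le> x"
  shows "f_t t a b x \<le> exp (- (t\<^sup>2 * (x - b)\<^sup>2)) / 2"
proof -
  have "f_t t a b x \<le> (\<integral>m. gauss_kernel t x m * indicator {..b} m \<partial>lborel)"
    unfolding f_t_eq_integral_gauss_kernel using t
    by (intro integral_mono' integrable_gauss_kernel_indicator)
       (auto simp: gauss_kernel_nonneg split: split_indicator)
  then show ?thesis
    using gauss_kernel_left_tail[OF t \<open>b \<le> x\<close>] by simp
qed

lemma f_t_le_left_of_interval:
  assumes t: "t > 0" and "x \<le> a"
  shows "f_t t a b x \<le> exp (- (t\<^sup>2 * (x - a)\<^sup>2)) / 2"
proof -
  have "f_t t a b x \<le> (\<integral>m. gauss_kernel t x m * indicator {a..} m \<partial>lborel)"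
    unfolding f_t_eq_integral_gauss_kernel using t
    by (intro integral_mono' integrable_gauss_kernel_indicator)
       (auto simp: gauss_kernel_nonneg split: split_indicator)
  then show ?thesis
    using gauss_kernel_right_tail[OF t \<open>x \<le> a\<close>] by (simp add: power2_commute)
qed

lemma one_minus_f_t_le_inside_interval:
  assumes t: "t > 0" and "a \<le> x" "x \<le> b"
  shows "1 - f_t t a b x \<le> exp (- (t\<^sup>2 * (x - a)\<^sup>2)) / 2 + exp (- (t\<^sup>2 * (x - b)\<^sup>2)) / 2"
proof -
  let ?k = "\<lambda>S m. gauss_kernel t x m * indicator S m"
  have int: "integrable lborel (?k S)" if "S \<in> sets borel" for S
    using integrable_gauss_kernel_indicator[OF t that] .
  have "1 = integral\<^sup>L lborel (gauss_kernel t x)"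
    using integral_gauss_kernel[OF t] by simp
  also have "\<dots> \<le> integral\<^sup>L lborel (\<lambda>m. ?k {a..b} m + ?k {..a} m + ?k {b..} m)"
    using t by (intro integral_mono integrable_gauss_kernel Bochner_Integration.integrable_add int)
      (auto simp: gauss_kernel_nonneg split: split_indicator)
  also have "\<dots> = f_t t a b x + integral\<^sup>L lborel (?k {..a}) + integral\<^sup>L lborel (?k {b..})"
    unfolding f_t_eq_integral_gauss_kernel
    by (simp add: int)
  finally show ?thesis
    using gauss_kernel_left_tail[OF t \<open>a \<le> x\<close>] gauss_kernel_right_tail[OF t \<open>x \<le> b\<close>]
    by (simp add: power2_commute)
qed

lemma abs_f_t_minus_indicator_le:
  assumes t: "t > 0"
  shows "\<bar>f_t t a b x - indicator {a..b} x\<bar>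
    \<le> exp (- (t\<^sup>2 * (x - a)\<^sup>2)) / 2 + exp (- (t\<^sup>2 * (x - b)\<^sup>2)) / 2"
proof -
  have pos: "0 \<le> f_t t a b x" "0 < exp (- (t\<^sup>2 * (x - a)\<^sup>2))" "0 < exp (- (t\<^sup>2 * (x - b)\<^sup>2))"
    using t by (auto intro: f_t_nonneg)
  consider "x < a" | "a \<le> x" "x \<le> b" | "b < x"
    by linarith
  then show ?thesis
  proof cases
    case 1
    then have "\<bar>f_t t a b x - indicator {a..b} x\<bar> = f_t t a b x"
      using pos by simp
    also have "\<dots> \<le> exp (- (t\<^sup>2 * (x - a)\<^sup>2)) / 2"
      using 1 f_t_le_left_of_interval[OF t, of x a b] by simp
    finally show ?thesis
      using pos by linarith
  next
    case 2
    then show ?thesis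
      using one_minus_f_t_le_inside_interval[OF t 2] f_t_le_1[OF t, of a b x] by simp
  next
    case 3
    then have "\<bar>f_t t a b x - indicator {a..b} x\<bar> = f_t t a b x"
      using pos by simp
    also have "\<dots> \<le> exp (- (t\<^sup>2 * (x - b)\<^sup>2)) / 2"
      using 3 f_t_le_right_of_interval[OF t, of b x a] by simp
    finally show ?thesis
      using pos by linarith
  qed
qed

(* F need not be integrable (its integral is then 0), which spares proving f_t measurable. *)
lemma abs_integral_le_integral:
  fixes F G :: "'a \<Rightarrow> real"
  assumes G: "integrable M G" and FG: "\<And>x. x \<in> space M \<Longrightarrow> \<bar>F x\<bar> \<le> G x"
  shows "\<bar>integral\<^sup>L M F\<bar> \<le> integral\<^sup>L M G"
proof -
  have G_nonneg: "0 \<le> G x" if "x \<in> space M" for x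
    using FG[OF that] by linarith
  have "integral\<^sup>L M F \<le> integral\<^sup>L M G"
    by (rule integral_mono'[OF G]) (use FG G_nonneg in \<open>auto simp: abs_le_iff\<close>)
  moreover have "integral\<^sup>L M (\<lambda>x. - F x) \<le> integral\<^sup>L M G"
    by (rule integral_mono'[OF G]) (use FG G_nonneg in \<open>auto simp: abs_le_iff\<close>)
  ultimately show ?thesis
    by (simp add: abs_le_iff)
qed

lemma abs_R_I_le_integral:
  fixes G :: "real \<Rightarrow> real"
  assumes "integrable lborel G" "\<And>x. 0 \<le> G x"
    and "\<And>x. 1/4 \<le> x \<Longrightarrow>
      \<bar>(f_t t a b x - indicator {a..b} x) * tanh (pi * sqrt (x - 1/4))\<bar> \<le> G x"
  shows "\<bar>R_I t a b\<bar> \<le> integral\<^sup>L lborel G / (4 * pi)"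
proof -
  have "\<bar>LINT x:{1/4..}|lborel. (f_t t a b x - indicator {a..b} x) * tanh (pi * sqrt (x - 1/4))\<bar>
      \<le> integral\<^sup>L lborel G"
    unfolding set_lebesgue_integral_def
    by (rule abs_integral_le_integral) (auto simp: assms split: split_indicator)
  then show ?thesis
    unfolding R_I_def by (simp add: abs_mult divide_right_mono)
qed

lemma tanh_le_double:
  fixes y :: real
  assumes "0 \<le> y"
  shows "tanh y \<le> 2 * y"
proof -
  let ?e = "exp (- 2 * y)"
  have e: "0 < ?e" "?e \<le> 1" "1 - 2 * y \<le> ?e"
    using assms exp_ge_add_one_self[of "- 2 * y"] by auto
  then have "(1 - ?e) / (1 + ?e) \<le> (1 - ?e) / 1"
    by (intro divide_left_mono) (simp_all add: add_pos_pos)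
  then show ?thesis
    unfolding tanh_real_altdef div_by_1 using e by linarith
qed

lemma abs_R_I_le_inverse:
  assumes t: "t > 0"
  shows "\<bar>R_I t a b\<bar> \<le> 1 / t"
proof -
  let ?G = "\<lambda>x. sqrt pi / (2 * t) * (gauss_kernel t a x + gauss_kernel t b x)"
  have "\<bar>R_I t a b\<bar> \<le> integral\<^sup>L lborel ?G / (4 * pi)"
  proof (rule abs_R_I_le_integral)
    show "integrable lborel ?G"
      using t by (intro integrable_mult_right Bochner_Integration.integrable_add integrable_gauss_kernel)
    fix x
    show "0 \<le> ?G x"
      using t by (simp add: gauss_kernel_nonneg)
    have "?G x = exp (- (t\<^sup>2 * (x - a)\<^sup>2)) / 2 + exp (- (t\<^sup>2 * (x - b)\<^sup>2)) / 2"
      using t by (simp add: gauss_kernel_def field_simps)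
    then have "\<bar>f_t t a b x - indicator {a..b} x\<bar> \<le> ?G x"
      using abs_f_t_minus_indicator_le[OF t] by simp
    moreover have "\<bar>tanh (pi * sqrt (x - 1/4))\<bar> \<le> 1"
      using tanh_real_bounds[of "pi * sqrt (x - 1/4)"] by auto
    then have "\<bar>f_t t a b x - indicator {a..b} x\<bar> * \<bar>tanh (pi * sqrt (x - 1/4))\<bar>
        \<le> \<bar>f_t t a b x - indicator {a..b} x\<bar>"
      by (intro mult_right_le_one_le) auto
    ultimately show "\<bar>(f_t t a b x - indicator {a..b} x) * tanh (pi * sqrt (x - 1/4))\<bar> \<le> ?G x"
      unfolding abs_mult by linarith
  qed
  also have "\<dots> = sqrt pi / (4 * pi * t)"
    using t by (simp add: integrable_gauss_kernel integral_gauss_kernel)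
  also have "\<dots> \<le> 1 / t"
  proof -
    have "sqrt pi \<le> sqrt 4"
      using pi_less_4 by (intro real_sqrt_le_mono) simp
    then show ?thesis
      using t pi_gt3 by (simp add: field_simps)
  qed
  finally show ?thesis .
qed

lemma R_I_integrand_le_half_gaussian:
  assumes t: "t > 0" and "b \<le> 1/4" "1/4 \<le> x"
  shows "\<bar>(f_t t a b x - indicator {a..b} x) * tanh (pi * sqrt (x - 1/4))\<bar>
    \<le> pi * exp (- (t\<^sup>2 * (1/4 - b)\<^sup>2)) / (2 * sqrt t) *
       (exp (- (t * (x - 1/4))\<^sup>2) * (1 + t * (x - 1/4)))"
proof -
  define u where "u = x - 1/4"
  define E where "E = exp (- (t\<^sup>2 * (1/4 - b)\<^sup>2))"
  have u: "0 \<le> u"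
    using assms by (simp add: u_def)
  have "indicator {a..b} x * tanh (pi * sqrt u) = 0"
    using assms by (auto simp: u_def split: split_indicator)
  then have integrand_eq:
    "(f_t t a b x - indicator {a..b} x) * tanh (pi * sqrt u) = f_t t a b x * tanh (pi * sqrt u)"
    by (simp add: left_diff_distrib)
  have "\<bar>(f_t t a b x - indicator {a..b} x) * tanh (pi * sqrt u)\<bar> = f_t t a b x * tanh (pi * sqrt u)"
    unfolding integrand_eq using u t f_t_nonneg[of t a b x] by simp
  also have "\<dots> \<le> (E * exp (- (t\<^sup>2 * u\<^sup>2)) / 2) * (pi * (1 + t * u) / sqrt t)"
  proof (rule mult_mono)
    have "exp (- (t\<^sup>2 * (x - b)\<^sup>2)) \<le> E * exp (- (t\<^sup>2 * u\<^sup>2))"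
      unfolding E_def u_def using assms by (intro exp_neg_square_le_split) simp
    then show "f_t t a b x \<le> E * exp (- (t\<^sup>2 * u\<^sup>2)) / 2"
      using f_t_le_right_of_interval[OF t, of b x a] assms by simp
    have "sqrt (1 * (t * u)) \<le> (1 + t * u) / 2"
      using t u by (intro arith_geo_mean_sqrt) simp_all
    then have "2 * sqrt u * sqrt t \<le> 1 + t * u"
      by (simp add: real_sqrt_mult mult_ac)
    then have "pi * (2 * sqrt u * sqrt t) \<le> pi * (1 + t * u)"
      by (rule mult_left_mono) simp
    then have "2 * (pi * sqrt u) \<le> pi * (1 + t * u) / sqrt t"
      using t by (simp add: pos_le_divide_eq mult_ac)
    then show "tanh (pi * sqrt u) \<le> pi * (1 + t * u) / sqrt t"
      using tanh_le_double[of "pi * sqrt u"] u by simp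
  qed (use t u in \<open>simp_all add: E_def\<close>)
  also have "\<dots> = pi * E / (2 * sqrt t) * (exp (- (t * u)\<^sup>2) * (1 + t * u))"
    by (simp add: power_mult_distrib)
  finally show ?thesis
    by (simp add: u_def E_def)
qed

lemma abs_R_I_le_exp:
  assumes t: "t > 0" and "b \<le> 1/4"
  shows "\<bar>R_I t a b\<bar> \<le> exp (- (3/4) * t\<^sup>2 * (1/4 - b)\<^sup>2) / t powr (3/2)"
proof -
  define E where "E = exp (- (t\<^sup>2 * (1/4 - b)\<^sup>2))"
  define K where "K = pi * E / (2 * sqrt t)"
  define g where "g y = indicator {0..} y * (exp (- y\<^sup>2) * (1 + y))" for y :: real
  have "g = (\<lambda>y. indicator {0..} y *\<^sub>R exp (- y\<^sup>2) + indicator {0..} y *\<^sub>R (exp (- y\<^sup>2) * y))"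
    by (simp add: g_def fun_eq_iff algebra_simps)
  then have "has_bochner_integral lborel g ((sqrt pi + 1) / 2)"
    using has_bochner_integral_add[OF gaussian_moment_0 gaussian_moment_1]
    by (simp add: add_divide_distrib)
  then have G: "has_bochner_integral lborel (\<lambda>x. K * g (t * (x - 1/4))) (K * ((sqrt pi + 1) / 2 / t))"
    by (intro has_bochner_integral_mult_right has_bochner_integral_lborel_rescale t)
  have "\<bar>R_I t a b\<bar> \<le> integral\<^sup>L lborel (\<lambda>x. K * g (t * (x - 1/4))) / (4 * pi)"
  proof (rule abs_R_I_le_integral)
    show "integrable lborel (\<lambda>x. K * g (t * (x - 1/4)))"
      using G by (rule integrable.intros)
    have "0 \<le> g y" for y
      by (simp add: g_def split: split_indicator)
    then show "0 \<le> K * g (t * (x - 1/4))" for x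
      using t by (simp add: K_def E_def)
    show "\<bar>(f_t t a b x - indicator {a..b} x) * tanh (pi * sqrt (x - 1/4))\<bar> \<le> K * g (t * (x - 1/4))"
      if "1/4 \<le> x" for x
      using R_I_integrand_le_half_gaussian[OF t \<open>b \<le> 1/4\<close> that] that t
      by (simp add: K_def E_def g_def)
  qed
  also have "\<dots> = K * ((sqrt pi + 1) / 2 / t) / (4 * pi)"
    by (simp only: has_bochner_integral_integral_eq[OF G])
  also have "\<dots> = E * ((sqrt pi + 1) / 16) / (t * sqrt t)"
    using t by (simp add: K_def field_simps)
  also have "\<dots> \<le> exp (- (3/4) * t\<^sup>2 * (1/4 - b)\<^sup>2) * 1 / (t * sqrt t)"
  proof (intro divide_right_mono mult_mono)
    show "E \<le> exp (- (3/4) * t\<^sup>2 * (1/4 - b)\<^sup>2)"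
      unfolding E_def by simp
    have "sqrt pi \<le> sqrt 4"
      using pi_less_4 by (intro real_sqrt_le_mono) simp
    then show "(sqrt pi + 1) / 16 \<le> 1"
      by simp
  qed (use t in auto)
  also have "t * sqrt t = t powr (3/2)"
  proof -
    have "t powr (3/2) = t powr 1 * t powr (1/2)"
      unfolding powr_add[symmetric] by simp
    then show ?thesis
      using t by (simp add: powr_half_sqrt)
  qed
  finally show ?thesis
    by simp
qed

theorem proposition3p4:
  "\<exists>C::real. \<forall>t a b :: real. 0 \<le> a \<longrightarrow> a \<le> b \<longrightarrow> t > 0 \<longrightarrow>
      \<bar>R_I t a b\<bar> \<le> C * (1 / t) \<and>
      (b \<le> 1/4 \<longrightarrow>
         \<bar>R_I t a b\<bar> \<le> C * (exp (- (3/4) * t\<^sup>2 * (1/4 - b)\<^sup>2) / t powr (3/2)))"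
  using abs_R_I_le_inverse abs_R_I_le_exp by (intro exI[of _ 1]) simp

end
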